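(* Fix $\Omega>0$, $\beta>0$ and $x\in\mathbb R$. For $h>0$ put $\xi=e^{\beta h}$, $\omega_0=\Omega/h$, $\Omega_0(h)=\frac{\omega_0}{\xi}|1-\xi|$, $\Omega_D(h)=\frac{\omega_0}{\xi}(1+\xi)$, $\omega_h^2(k)=\frac{\omega_0^2}{\xi^2}\big((\xi-\cos k)^2+\sin^2k\big)$, and $$\mathcal G^{(h)}_n(z)=\frac{1}{2\pi}\int_0^{2\pi}\frac{e^{ikn}}{\omega_h^2(k)-z^2}\,dk$$ for integers $n$ and $z$ with $\omega_h^2(k)\ne z^2$ for all $k$. Let $n(h)$ be integers with $n(h)\,h\to|x|$ as $h\to0^+$. Then: (1) if $0\le\omega<\beta\Omega$, $$\lim_{h\to0^+}\frac1h\,\mathcal G^{(h)}_{n(h)}(\omega)=\frac{1}{2\Omega^2}\,\frac{e^{-|x|\sqrt{\beta^2-\omega^2/\Omega^2}}}{\sqrt{\beta^2-\omega^2/\Omega^2}};$$ (2) if $\omega>\beta\Omega$, $$\lim_{h\to0^+}\frac1h\,\lim_{\epsilon\to0^+}\mathcal G^{(h)}_{n(h)}(\omega+i\epsilon)=\frac{i}{2\Omega^2}\,\frac{e^{i|x|\sqrt{\omega^2/\Omega^2-\beta^2}}}{\sqrt{\omega^2/\Omega^2-\beta^2}}.$$ Moreover these limits $g(|x|,\omega)$ satisfy, in the sense of distributions in $x$, $-\Omega^2\big(\frac{d^2}{dx^2}+\frac{\omega^2}{\Omega^2}-\beta^2\big)g(|x|,\omega)=\delta(x)$.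
   Context: This is the continuum limit of the lattice Green's function of the exponentially graded linear chain (masses $m_0\xi^{2p}$, spring constants $m_0\xi^{2p}\omega_0^2$) with lattice spacing $h$, under the scalings $\xi=e^{\beta h}$, $\omega_0^2=\Omega^2/h^2$, particle position $x=ph$; the continuum equation of motion is $e^{2\beta x}\partial_t^2u=\Omega^2\partial_x(e^{2\beta x}\partial_xu)$, which after $u=e^{-\beta x}y$ becomes the Klein–Gordon equation $\Omega^{-2}\partial_t^2y-\partial_x^2y+\beta^2y=0$. The factor $1/h$ converts matrix multiplication into convolution integrals. For small $h$ one has $\Omega_0(h)\to\beta\Omega$ and $\Omega_D(h)\to\infty$. *)

theory Defs
  imports "HOL-Analysis.Analysis"
begin

definition xi :: "real \<Rightarrow> real \<Rightarrow> real" where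
  "xi \<beta> h = exp (\<beta> * h)"

definition omega0 :: "real \<Rightarrow> real \<Rightarrow> real" where
  "omega0 \<Omega> h = \<Omega> / h"

definition OmegaLow :: "real \<Rightarrow> real \<Rightarrow> real \<Rightarrow> real" where
  "OmegaLow \<Omega> \<beta> h = omega0 \<Omega> h / xi \<beta> h * \<bar>1 - xi \<beta> h\<bar>"

definition OmegaD :: "real \<Rightarrow> real \<Rightarrow> real \<Rightarrow> real" where
  "OmegaD \<Omega> \<beta> h = omega0 \<Omega> h / xi \<beta> h * (1 + xi \<beta> h)"

definition omh2 :: "real \<Rightarrow> real \<Rightarrow> real \<Rightarrow> real \<Rightarrow> real" where
  "omh2 \<Omega> \<beta> h k = (omega0 \<Omega> h)\<^sup>2 / (xi \<beta> h)\<^sup>2 * ((xi \<beta> h - cos k)\<^sup>2 + (sin k)\<^sup>2)"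

text \<open>Lattice Green's function G^(h)_n(z) (meaningful when omh2 never equals z^2).\<close>
definition latG :: "real \<Rightarrow> real \<Rightarrow> real \<Rightarrow> int \<Rightarrow> complex \<Rightarrow> complex" where
  "latG \<Omega> \<beta> h n z =
     (1 / (2 * pi)) * integral {0..2*pi}
        (\<lambda>k. exp (\<i> * of_real k * of_int n) / (of_real (omh2 \<Omega> \<beta> h k) - z\<^sup>2))"

definition test_function :: "(real \<Rightarrow> real) \<Rightarrow> bool" where
  "test_function \<phi> \<longleftrightarrow>
     (\<forall>m x. ((deriv ^^ m) \<phi>) differentiable (at x)) \<and> (\<exists>R. \<forall>x. R < \<bar>x\<bar> \<longrightarrow> \<phi> x = 0)"

definition solves_green_eq :: "real \<Rightarrow> real \<Rightarrow> real \<Rightarrow> (real \<Rightarrow> complex) \<Rightarrow> bool" where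
  "solves_green_eq \<Omega> \<beta> \<omega> G \<longleftrightarrow>
     (\<forall>\<phi>. test_function \<phi> \<longrightarrow>
        ((\<lambda>x. - of_real (\<Omega>\<^sup>2) * G x *
              of_real (deriv (deriv \<phi>) x + (\<omega>\<^sup>2 / \<Omega>\<^sup>2 - \<beta>\<^sup>2) * \<phi> x))
          has_integral of_real (\<phi> 0)) UNIV)"

end

theory Submission
  imports Defs "HOL-Complex_Analysis.Complex_Analysis" "HOL-Real_Asymp.Real_Asymp"
begin

text \<open>
  Since \<open>\<omega>\<^sub>h\<^sup>2(k) - z\<^sup>2 = B (W - cos k)\<close> with \<open>B = 2\<Omega>\<^sup>2/(h\<^sup>2\<xi>)\<close> and
  \<open>W = cosh(\<beta>h) - z\<^sup>2h\<^sup>2\<xi>/(2\<Omega>\<^sup>2)\<close>, writing \<open>W = (r + 1/r)/2\<close> with \<open>|r| < 1\<close> Cauchy's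
  integral formula on the unit circle gives \<open>G\<^sub>n = r\<^bsup>|n|\<^esup> / (B (1/r - r)/2)\<close>.
  Below the band, \<open>W(\<omega>) > 1\<close> and \<open>r = e\<^bsup>-a\<^esup>\<close> with \<open>sinh a = \<surd>(W\<^sup>2 - 1)\<close>. Above it,
  \<open>W(\<omega> + i\<epsilon>)\<close> approaches a point of \<open>(0,1)\<close> from the lower half plane, so \<open>r\<close> tends to
  \<open>e\<^bsup>i\<theta>\<^esup>\<close> with \<open>sin \<theta> = \<surd>(1 - W\<^sup>2)\<close>. As \<open>h \<rightarrow> 0\<close>, \<open>W(\<omega>)\<^sup>2 - 1 \<sim> (\<beta>\<^sup>2 - \<omega>\<^sup>2/\<Omega>\<^sup>2) h\<^sup>2\<close>,
  hence \<open>a/h \<rightarrow> \<kappa>\<close> resp. \<open>\<theta>/h \<rightarrow> q\<close>, while \<open>n h \<rightarrow> |x|\<close> and \<open>B h\<^sup>2 \<rightarrow> 2\<Omega>\<^sup>2\<close>.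
  The distributional equation is integration by parts against \<open>e\<^bsup>l|y|\<^esup>\<close> on both half lines,
  with \<open>l = -\<kappa>\<close> resp. \<open>l = iq\<close>: the jump \<open>2l\<close> of its derivative at \<open>0\<close> produces the delta.
\<close>

definition joukowski :: "complex \<Rightarrow> complex" where
  "joukowski r = (r + 1 / r) / 2"

definition disp_scale :: "real \<Rightarrow> real \<Rightarrow> real \<Rightarrow> real" where
  "disp_scale \<Omega> \<beta> h = 2 * \<Omega>\<^sup>2 / (h\<^sup>2 * exp (\<beta> * h))"

definition disp_shift :: "real \<Rightarrow> real \<Rightarrow> real \<Rightarrow> complex \<Rightarrow> complex" where
  "disp_shift \<Omega> \<beta> h z = of_real (cosh (\<beta> * h)) - z\<^sup>2 * of_real (h\<^sup>2 * exp (\<beta> * h) / (2 * \<Omega>\<^sup>2))"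

definition disp_shift_real :: "real \<Rightarrow> real \<Rightarrow> real \<Rightarrow> real \<Rightarrow> real" where
  "disp_shift_real \<Omega> \<beta> \<omega> h = cosh (\<beta> * h) - \<omega>\<^sup>2 * (h\<^sup>2 * exp (\<beta> * h) / (2 * \<Omega>\<^sup>2))"

lemma disp_shift_of_real: "disp_shift \<Omega> \<beta> h (of_real \<omega>) = of_real (disp_shift_real \<Omega> \<beta> \<omega> h)"
  by (simp add: disp_shift_def disp_shift_real_def)

lemma omh2_minus_sq_eq:
  assumes "h \<noteq> 0" "\<Omega> \<noteq> 0"
  shows "of_real (omh2 \<Omega> \<beta> h k) - z\<^sup>2 = of_real (disp_scale \<Omega> \<beta> h) * (disp_shift \<Omega> \<beta> h z - of_real (cos k))"
proof -
  define E where "E = exp (\<beta> * h)"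
  define K where "K = h\<^sup>2 * E / (2 * \<Omega>\<^sup>2)"
  have E: "E > 0" "cosh (\<beta> * h) = (E + 1 / E) / 2"
    by (simp_all add: E_def cosh_def exp_minus inverse_eq_divide)
  have "(E - cos k)\<^sup>2 + (sin k)\<^sup>2 = E\<^sup>2 - 2 * E * cos k + 1"
    using sin_cos_squared_add[of k] by (simp add: power2_diff algebra_simps)
  then have omh2: "omh2 \<Omega> \<beta> h k = disp_scale \<Omega> \<beta> h * (cosh (\<beta> * h) - cos k)"
    unfolding omh2_def omega0_def xi_def disp_scale_def E_def[symmetric] E(2)
    using E(1) assms by (simp add: field_simps power2_eq_square)
  have scale: "disp_scale \<Omega> \<beta> h * K = 1"
    unfolding disp_scale_def K_def E_def using assms by simp
  have "of_real (disp_scale \<Omega> \<beta> h) * (disp_shift \<Omega> \<beta> h z - of_real (cos k))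
      = of_real (disp_scale \<Omega> \<beta> h * (cosh (\<beta> * h) - cos k)) - z\<^sup>2 * of_real (disp_scale \<Omega> \<beta> h * K)"
    unfolding disp_shift_def E_def[symmetric] K_def[symmetric] by (simp add: algebra_simps)
  then show ?thesis unfolding omh2 scale by simp
qed

lemma one_minus_power2_neq_0:
  fixes r :: "'a :: real_normed_div_algebra"
  assumes "norm r < 1"
  shows "1 - r\<^sup>2 \<noteq> 0"
proof
  assume "1 - r\<^sup>2 = 0"
  then have "norm r ^ 2 = 1" by (metis eq_iff_diff_eq_0 norm_one norm_power)
  with assms show False by (simp add: abs_square_eq_1)
qed

lemma joukowski_minus_cos:
  assumes "r \<noteq> 0"
  shows "joukowski r - of_real (cos x)
           = - (exp (\<i> * of_real x) - r) * (exp (\<i> * of_real x) - 1 / r) / (2 * exp (\<i> * of_real x))"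
proof -
  define z where "z = exp (\<i> * of_real x)"
  have "z \<noteq> 0" unfolding z_def by simp
  have cos: "of_real (cos x) = (z + 1 / z) / 2"
    unfolding z_def by (simp add: cos_of_real[symmetric] cos_exp_eq exp_minus field_simps)
  show ?thesis
    unfolding z_def[symmetric] joukowski_def cos using assms \<open>z \<noteq> 0\<close> by (simp add: field_simps)
qed

lemma has_integral_exp_div_joukowski_minus_cos_nat:
  fixes r :: complex and m :: nat
  assumes r0: "r \<noteq> 0" and r1: "norm r < 1"
  shows "((\<lambda>k. exp (\<i> * of_real k * of_nat m) / (joukowski r - of_real (cos k)))
           has_integral (4 * pi * r ^ (m + 1) / (1 - r\<^sup>2))) {0..2*pi}"
proof -
  txt \<open>With \<open>z = e\<^bsup>ik\<^esup>\<close> the integral becomes \<open>\<oint> g(z)/(z - r) dz\<close> over the unit circle,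
    where \<open>g\<close> is holomorphic on the closed disc because \<open>1/r\<close> lies outside it.\<close>
  define g where "g u = 2 * \<i> * u ^ m / (u - 1 / r)" for u
  have nr: "norm (1 / r) > 1" using r0 r1 by (simp add: norm_divide field_simps)
  have "u - 1 / r \<noteq> 0" if "u \<in> cball 0 1" for u using nr that by auto
  then have hol: "g holomorphic_on ball 0 1" "continuous_on (cball 0 1) g"
    unfolding g_def by (auto intro!: holomorphic_intros continuous_intros)
  have "((\<lambda>u. g u / (u - r)) has_contour_integral (2 * of_real pi * \<i> * g r)) (circlepath 0 1)"
    by (rule Cauchy_integral_circlepath[OF hol(2) hol(1)]) (use r1 in simp)
  then have H: "((\<lambda>t. g (exp (2 * of_real pi * \<i> * of_real t)) / (exp (2 * of_real pi * \<i> * of_real t) - r)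
         * (2 * pi * \<i> * exp (2 * of_real pi * \<i> * t))) has_integral (2 * of_real pi * \<i> * g r)) {0..1}"
    unfolding has_contour_integral_def
    by (subst (asm) has_integral_cong[OF arg_cong2[where f="(*)", OF refl vector_derivative_circlepath01]])
       (auto simp: circlepath)
  have residue: "2 * of_real pi * \<i> * g r = 4 * pi * r ^ (m + 1) / (1 - r\<^sup>2)"
    unfolding g_def using r0 one_minus_power2_neq_0[OF r1] by (simp add: field_simps power2_eq_square)
  have "((\<lambda>x. (\<lambda>t. g (exp (2 * of_real pi * \<i> * of_real t)) / (exp (2 * of_real pi * \<i> * of_real t) - r)
         * (2 * pi * \<i> * exp (2 * of_real pi * \<i> * t))) ((1 / (2 * pi)) * x))
       has_integral (1 / \<bar>1 / (2 * pi)\<bar>) *\<^sub>R (2 * of_real pi * \<i> * g r)) ((\<lambda>x. x / (1 / (2 * pi))) ` {0..1})"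
    by (rule has_integral_stretch_real[OF H]) simp
  moreover have "(\<lambda>x. x / (1 / (2 * pi))) ` {0..1} = {0..2*pi}"
    using image_mult_atLeastAtMost[of "2 * pi" 0 1] by (simp add: mult.commute)
  moreover have "(\<lambda>t. g (exp (2 * of_real pi * \<i> * of_real t)) / (exp (2 * of_real pi * \<i> * of_real t) - r)
         * (2 * pi * \<i> * exp (2 * of_real pi * \<i> * t))) ((1 / (2 * pi)) * x)
       = (2 * pi) * (exp (\<i> * of_real x * of_nat m) / (joukowski r - of_real (cos x)))" for x
  proof -
    define z where "z = exp (\<i> * of_real x)"
    have z: "norm z = 1" "z \<noteq> 0" unfolding z_def by simp_all
    have circle: "exp (2 * of_real pi * \<i> * of_real ((1 / (2 * pi)) * x)) = z"
      unfolding z_def by (simp add: field_simps)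
    have power: "exp (\<i> * of_real x * of_nat m) = z ^ m"
      unfolding z_def by (metis exp_of_nat_mult mult.commute)
    have "z - r \<noteq> 0" "z - 1 / r \<noteq> 0" using z r1 nr by auto
    moreover from this(2) have "r * z - 1 \<noteq> 0" using r0 by (auto simp: field_simps)
    ultimately have "(r * z - 1) * (z - r) \<noteq> 0" by simp
    moreover have "r + r * (z * z) - (z + r * (r * z)) = (r * z - 1) * (z - r)" by (simp add: algebra_simps)
    ultimately have "r + r * (z * z) - (z + r * (r * z)) \<noteq> 0" by simp
    then show ?thesis
      unfolding circle power joukowski_minus_cos[OF r0, of x, folded z_def] g_def
      using z r0 by (simp add: field_simps)
  qed
  ultimately have "((\<lambda>x. (2 * pi) * (exp (\<i> * of_real x * of_nat m) / (joukowski r - of_real (cos x))))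
         has_integral (2 * pi) * (4 * pi * r ^ (m + 1) / (1 - r\<^sup>2))) {0..2*pi}"
    unfolding residue by (simp add: scaleR_conv_of_real)
  from has_integral_mult_right[OF this, of "1 / (2 * pi)"] show ?thesis
    by (simp add: mult.assoc mult.left_commute)
qed

lemma has_integral_exp_div_joukowski_minus_cos:
  fixes r :: complex and n :: int
  assumes r0: "r \<noteq> 0" and r1: "norm r < 1"
  shows "((\<lambda>k. exp (\<i> * of_real k * of_int n) / (joukowski r - of_real (cos k)))
           has_integral (4 * pi * r ^ (nat \<bar>n\<bar> + 1) / (1 - r\<^sup>2))) {0..2*pi}"
proof (cases "n \<ge> 0")
  case True
  then obtain m where "n = int m" by (metis nonneg_eq_int)
  then show ?thesis using has_integral_exp_div_joukowski_minus_cos_nat[OF r0 r1, of m] by simp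
next
  case False
  define m where "m = nat (- n)"
  have nm: "n = - int m" "nat \<bar>n\<bar> = m" using False unfolding m_def by auto
  define F where "F k = exp (\<i> * of_real k * of_nat m) / (joukowski r - of_real (cos k))" for k
  have "((\<lambda>x. F (- x)) has_integral (4 * pi * r ^ (m + 1) / (1 - r\<^sup>2))) {- (2 * pi)..- 0}"
    using has_integral_exp_div_joukowski_minus_cos_nat[OF r0 r1, of m]
    unfolding F_def[abs_def] by (subst has_integral_reflect_real) simp
  then have "((\<lambda>x. (\<lambda>x. F (- x)) (1 *\<^sub>R x + (- (2 * pi))))
      has_integral ((4 * pi * r ^ (m + 1) / (1 - r\<^sup>2)) /\<^sub>R 1 ^ DIM(real)))
      (cbox ((- (2 * pi) - (- (2 * pi))) /\<^sub>R 1) ((- 0 - (- (2 * pi))) /\<^sub>R 1))"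
    by (subst has_integral_affinity_iff) (auto simp: cbox_interval)
  then have reflected: "((\<lambda>x. F (2 * pi - x)) has_integral (4 * pi * r ^ (m + 1) / (1 - r\<^sup>2))) {0..2*pi}"
    by (simp add: cbox_interval)
  have "F (2 * pi - x) = exp (\<i> * of_real x * of_int n) / (joukowski r - of_real (cos x))" for x
  proof -
    have "\<i> * of_real (2 * pi - x) * of_nat m = of_nat m * (2 * pi * \<i>) + \<i> * of_real x * of_int n"
      unfolding nm by (simp add: algebra_simps)
    then have "exp (\<i> * of_real (2 * pi - x) * of_nat m) = exp (of_nat m * (2 * pi * \<i>)) * exp (\<i> * of_real x * of_int n)"
      by (metis exp_add)
    then show ?thesis unfolding F_def by (simp add: exp_of_nat_mult)
  qed
  then show ?thesis using reflected nm by simp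
qed

lemma latG_eq_root_power:
  assumes h: "h > 0" and \<Omega>: "\<Omega> > 0" and r0: "r \<noteq> 0" and r1: "norm r < 1"
    and W: "disp_shift \<Omega> \<beta> h z = joukowski r"
  shows "latG \<Omega> \<beta> h n z = r ^ nat \<bar>n\<bar> / (of_real (disp_scale \<Omega> \<beta> h) * ((1 / r - r) / 2))"
proof -
  define B where "B = disp_scale \<Omega> \<beta> h"
  have B: "B \<noteq> 0" unfolding B_def disp_scale_def using h \<Omega> by simp
  have "((\<lambda>k. (1 / of_real B) * (exp (\<i> * of_real k * of_int n) / (joukowski r - of_real (cos k))))
      has_integral (1 / of_real B) * (4 * pi * r ^ (nat \<bar>n\<bar> + 1) / (1 - r\<^sup>2))) {0..2*pi}"
    by (rule has_integral_mult_right[OF has_integral_exp_div_joukowski_minus_cos[OF r0 r1]])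
  moreover have "(1 / of_real B) * (exp (\<i> * of_real k * of_int n) / (joukowski r - of_real (cos k)))
      = exp (\<i> * of_real k * of_int n) / (of_real (omh2 \<Omega> \<beta> h k) - z\<^sup>2)" for k
    using omh2_minus_sq_eq[of h \<Omega> \<beta> k z] h \<Omega> B unfolding W B_def by simp
  ultimately have "integral {0..2*pi} (\<lambda>k. exp (\<i> * of_real k * of_int n) / (of_real (omh2 \<Omega> \<beta> h k) - z\<^sup>2))
      = (1 / of_real B) * (4 * pi * r ^ (nat \<bar>n\<bar> + 1) / (1 - r\<^sup>2))"
    by (simp add: integral_unique)
  then show ?thesis
    unfolding latG_def B_def[symmetric] using B r0 one_minus_power2_neq_0[OF r1]
    by (simp add: field_simps power2_eq_square)
qed

lemma norm_less_1_of_mult_eq_1: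
  fixes x y :: "'a :: real_normed_div_algebra"
  assumes "x * y = 1" "norm x < norm y"
  shows "norm x < 1"
proof (rule ccontr)
  assume "\<not> norm x < 1"
  then have "1 * 1 < norm x * norm y" using assms(2) by (intro mult_le_less_imp_less) auto
  then show False using assms(1) by (simp flip: norm_mult)
qed

lemma joukowski_inverse_in_disc:
  fixes W :: complex
  assumes "Im W < 0"
  defines "r \<equiv> W + \<i> * csqrt (1 - W\<^sup>2)"
  shows "r \<noteq> 0" "norm r < 1" "joukowski r = W"
proof -
  define t where "t = csqrt (1 - W\<^sup>2)"
  define r' where "r' = W - \<i> * t"
  have tt: "t\<^sup>2 = 1 - W\<^sup>2" unfolding t_def by simp
  have prod: "r * r' = 1" unfolding r_def r'_def t_def[symmetric]
    using tt by (simp add: algebra_simps power2_eq_square)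
  then show r0: "r \<noteq> 0" by auto
  have "1 / r = r'" using prod r0 by (simp add: field_simps)
  then show "joukowski r = W" unfolding joukowski_def r_def r'_def t_def[symmetric] by simp
  txt \<open>\<open>r\<close> and \<open>r'\<close> are the two preimages of \<open>W\<close>; \<open>Im W < 0\<close> together with \<open>Re t > 0\<close> makes
    \<open>|r| < |r'|\<close>, and \<open>r r' = 1\<close>.\<close>
  define a where "a = Re W"
  define b where "b = - Im W"
  define p where "p = Re t"
  define q where "q = Im t"
  have b0: "b > 0" using assms b_def by simp
  have e1: "p\<^sup>2 - q\<^sup>2 = 1 - a\<^sup>2 + b\<^sup>2" and e2: "p * q = a * b"
    using arg_cong[OF tt, of Re] arg_cong[OF tt, of Im]
    unfolding a_def b_def p_def q_def by (simp_all add: power2_eq_square algebra_simps)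
  have p0: "p > 0"
  proof -
    have "p \<ge> 0" using csqrt_principal[of "1 - W\<^sup>2"] unfolding p_def t_def by auto
    moreover have "p \<noteq> 0"
    proof
      assume "p = 0"
      then have "a = 0" using e2 b0 by simp
      then have "- q\<^sup>2 = 1 + b\<^sup>2" using e1 \<open>p = 0\<close> by simp
      then show False using zero_le_power2[of q] zero_le_power2[of b] by linarith
    qed
    ultimately show ?thesis by simp
  qed
  have "p * (a * q + b * p) = a * a * b + b * p * p" using e2 by (simp add: algebra_simps)
  also have "\<dots> > 0" using b0 p0 by (simp add: add_nonneg_pos)
  finally have "a * q + b * p > 0" using p0 by (simp add: zero_less_mult_iff)
  moreover have "(norm r)\<^sup>2 = (a - q)\<^sup>2 + (p - b)\<^sup>2" "(norm r')\<^sup>2 = (a + q)\<^sup>2 + (p + b)\<^sup>2"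
    unfolding r_def r'_def t_def[symmetric] a_def b_def p_def q_def cmod_power2
    by (simp_all add: algebra_simps power2_eq_square)
  ultimately have "(norm r)\<^sup>2 < (norm r')\<^sup>2" by (simp add: power2_eq_square algebra_simps)
  then have "norm r < norm r'" by (rule power2_less_imp_less) simp
  then show "norm r < 1" by (rule norm_less_1_of_mult_eq_1[OF prod])
qed

lemma latG_below_band:
  assumes h: "h > 0" and \<Omega>: "\<Omega> > 0" and w: "disp_shift_real \<Omega> \<beta> \<omega> h > 1"
  defines "u \<equiv> sqrt ((disp_shift_real \<Omega> \<beta> \<omega> h)\<^sup>2 - 1)"
  shows "latG \<Omega> \<beta> h n (of_real \<omega>) = of_real (exp (- (real (nat \<bar>n\<bar>) * arsinh u)) / (disp_scale \<Omega> \<beta> h * u))"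
proof -
  define a where "a = arsinh u"
  define r where "r = exp (- a)"
  have u0: "u > 0" unfolding u_def using w by (simp add: power_gt1)
  then have a0: "a > 0" unfolding a_def by simp
  have "cosh a = disp_shift_real \<Omega> \<beta> \<omega> h"
    unfolding a_def cosh_arsinh_real u_def using w by simp
  moreover have "(r + 1 / r) / 2 = cosh a" unfolding r_def cosh_def by (simp add: exp_minus field_simps)
  moreover have "joukowski (of_real r) = of_real ((r + 1 / r) / 2)" unfolding joukowski_def by simp
  ultimately have "joukowski (of_real r) = of_real (disp_shift_real \<Omega> \<beta> \<omega> h)" by simp
  moreover have "(1 / of_real r - of_real r) / 2 = (of_real u :: complex)"
  proof -
    have "(1 / r - r) / 2 = sinh a" unfolding r_def sinh_def by (simp add: exp_minus field_simps)
    then show ?thesis unfolding a_def by (metis of_real_diff of_real_divide of_real_1 of_real_numeral sinh_arsinh_real)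
  qed
  moreover have "r ^ nat \<bar>n\<bar> = exp (- (real (nat \<bar>n\<bar>) * a))"
    unfolding r_def by (simp add: exp_of_nat_mult[symmetric])
  then have "(of_real r :: complex) ^ nat \<bar>n\<bar> = of_real (exp (- (real (nat \<bar>n\<bar>) * a)))"
    by (metis of_real_power)
  moreover have "r > 0" "r < 1" using a0 unfolding r_def by simp_all
  ultimately show ?thesis
    using latG_eq_root_power[OF h \<Omega>, of "of_real r" \<beta> "of_real \<omega>" n]
    unfolding disp_shift_of_real a_def by simp
qed

lemma tendsto_joukowski_inverse:
  fixes W :: "'a \<Rightarrow> complex"
  assumes W: "(W \<longlongrightarrow> of_real c) F" and c: "\<bar>c\<bar> < 1"
  shows "((\<lambda>e. W e + \<i> * csqrt (1 - (W e)\<^sup>2)) \<longlongrightarrow> of_real c + \<i> * of_real (sqrt (1 - c\<^sup>2))) F"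
proof -
  have c2: "c\<^sup>2 < 1" using c by (simp add: abs_square_less_1)
  have "((\<lambda>e. 1 - (W e)\<^sup>2) \<longlongrightarrow> of_real (1 - c\<^sup>2)) F"
    using tendsto_diff[OF tendsto_const tendsto_power[OF W, of 2], of 1] by simp
  moreover have "isCont csqrt (of_real (1 - c\<^sup>2))"
    by (rule continuous_at_csqrt) (use c2 in \<open>simp add: complex_nonpos_Reals_iff\<close>)
  ultimately have "((\<lambda>e. csqrt (1 - (W e)\<^sup>2)) \<longlongrightarrow> csqrt (of_real (1 - c\<^sup>2))) F"
    using isCont_tendsto_compose by blast
  moreover have "csqrt (of_real (1 - c\<^sup>2)) = of_real (sqrt (1 - c\<^sup>2))"
    by (rule of_real_sqrt[symmetric]) (use c2 in simp)
  ultimately show ?thesis by (intro tendsto_intros W) simp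
qed

lemma cis_arcsin_sqrt:
  assumes "0 \<le> c" "c \<le> 1"
  shows "cis (arcsin (sqrt (1 - c\<^sup>2))) = of_real c + \<i> * of_real (sqrt (1 - c\<^sup>2))"
proof -
  define s where "s = sqrt (1 - c\<^sup>2)"
  have "c\<^sup>2 \<le> 1" using assms by (simp add: power_le_one)
  then have s: "0 \<le> s" "s \<le> 1" "s\<^sup>2 = 1 - c\<^sup>2" unfolding s_def by simp_all
  then have "cos (arcsin s) = c" using assms by (simp add: cos_arcsin real_sqrt_unique)
  moreover have "sin (arcsin s) = s" using s by simp
  ultimately show ?thesis unfolding s_def[symmetric] by (simp add: complex_eq_iff)
qed

lemma Im_disp_shift_neg:
  assumes "h \<noteq> 0" "\<Omega> \<noteq> 0" "\<omega> > 0" "\<epsilon> > 0"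
  shows "Im (disp_shift \<Omega> \<beta> h (of_real \<omega> + \<i> * of_real \<epsilon>)) < 0"
proof -
  have "Im ((of_real \<omega> + \<i> * of_real \<epsilon>)\<^sup>2) = 2 * \<omega> * \<epsilon>" by (simp add: power2_eq_square)
  then show ?thesis
    unfolding disp_shift_def using assms by simp
qed

lemma disp_shift_tendsto_of_real:
  "((\<lambda>\<epsilon>. disp_shift \<Omega> \<beta> h (of_real \<omega> + \<i> * of_real \<epsilon>))
     \<longlongrightarrow> of_real (disp_shift_real \<Omega> \<beta> \<omega> h)) (at_right 0)"
proof -
  have "((\<lambda>\<epsilon>. disp_shift \<Omega> \<beta> h (of_real \<omega> + \<i> * of_real \<epsilon>))
      \<longlongrightarrow> disp_shift \<Omega> \<beta> h (of_real \<omega> + \<i> * of_real 0)) (at_right 0)"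
    unfolding disp_shift_def by (intro tendsto_intros)
  then show ?thesis by (simp add: disp_shift_of_real)
qed

lemma latG_above_band_tendsto:
  assumes h: "h > 0" and \<Omega>: "\<Omega> > 0" and \<omega>: "\<omega> > 0"
    and w: "0 < disp_shift_real \<Omega> \<beta> \<omega> h" "disp_shift_real \<Omega> \<beta> \<omega> h < 1"
  defines "v \<equiv> sqrt (1 - (disp_shift_real \<Omega> \<beta> \<omega> h)\<^sup>2)"
  shows "((\<lambda>\<epsilon>. latG \<Omega> \<beta> h n (of_real \<omega> + \<i> * of_real \<epsilon>))
           \<longlongrightarrow> \<i> * cis (real (nat \<bar>n\<bar>) * arcsin v) / of_real (disp_scale \<Omega> \<beta> h * v)) (at_right 0)"
proof -
  define N where "N = nat \<bar>n\<bar>"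
  define B where "B = disp_scale \<Omega> \<beta> h"
  define W where "W \<epsilon> = disp_shift \<Omega> \<beta> h (of_real \<omega> + \<i> * of_real \<epsilon>)" for \<epsilon>
  define r where "r \<epsilon> = W \<epsilon> + \<i> * csqrt (1 - (W \<epsilon>)\<^sup>2)" for \<epsilon>
  define \<theta> where "\<theta> = arcsin v"
  have B: "B > 0" unfolding B_def disp_scale_def using \<Omega> h by simp
  have "0 < v" "v \<le> 1" using w unfolding v_def by (simp_all add: abs_square_less_1)
  then have v: "v > 0" "sin \<theta> = v" unfolding \<theta>_def by simp_all
  have ImW: "Im (W \<epsilon>) < 0" if "\<epsilon> > 0" for \<epsilon>
    unfolding W_def using Im_disp_shift_neg h \<Omega> \<omega> that by simp
  have ev: "\<forall>\<^sub>F \<epsilon> in at_right 0. r \<epsilon> ^ N / (of_real B * ((1 / r \<epsilon> - r \<epsilon>) / 2))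
      = latG \<Omega> \<beta> h n (of_real \<omega> + \<i> * of_real \<epsilon>)"
    using eventually_at_right_less[of 0]
  proof eventually_elim
    case (elim \<epsilon>)
    note root = joukowski_inverse_in_disc[OF ImW[OF elim], folded r_def]
    show ?case
      unfolding N_def B_def by (rule latG_eq_root_power[OF h \<Omega> root(1,2), symmetric]) (simp add: root(3) W_def)
  qed
  have "(W \<longlongrightarrow> of_real (disp_shift_real \<Omega> \<beta> \<omega> h)) (at_right 0)"
    unfolding W_def[abs_def] by (rule disp_shift_tendsto_of_real)
  from tendsto_joukowski_inverse[OF this] have r_lim: "(r \<longlongrightarrow> cis \<theta>) (at_right 0)"
    using w unfolding r_def[abs_def] \<theta>_def v_def by (simp add: cis_arcsin_sqrt)
  have "1 / cis \<theta> = cis (- \<theta>)" by (simp add: divide_inverse)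
  then have shift: "(1 / cis \<theta> - cis \<theta>) / 2 = - \<i> * of_real v"
    unfolding v(2)[symmetric] by (simp add: complex_eq_iff)
  have "((\<lambda>\<epsilon>. r \<epsilon> ^ N / (of_real B * ((1 / r \<epsilon> - r \<epsilon>) / 2)))
      \<longlongrightarrow> cis \<theta> ^ N / (of_real B * ((1 / cis \<theta> - cis \<theta>) / 2))) (at_right 0)"
    using B v(1) by (intro tendsto_intros r_lim) (simp_all add: shift)
  then have "((\<lambda>\<epsilon>. r \<epsilon> ^ N / (of_real B * ((1 / r \<epsilon> - r \<epsilon>) / 2)))
      \<longlongrightarrow> cis \<theta> ^ N / (of_real B * (- \<i> * of_real v))) (at_right 0)"
    unfolding shift .
  from Lim_transform_eventually[OF this ev]
  have "((\<lambda>\<epsilon>. latG \<Omega> \<beta> h n (of_real \<omega> + \<i> * of_real \<epsilon>))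
      \<longlongrightarrow> cis (real N * \<theta>) / (of_real B * (- \<i> * of_real v))) (at_right 0)"
    by (simp only: Complex.DeMoivre)
  moreover have "X / (of_real B * (- \<i> * of_real v)) = \<i> * X / of_real (B * v)" for X
    using B v(1) by (simp add: field_simps)
  ultimately show ?thesis unfolding N_def B_def \<theta>_def by simp
qed

lemma disp_shift_real_tendsto:
  assumes "\<Omega> > 0" "\<beta> > 0"
  shows "(disp_shift_real \<Omega> \<beta> \<omega> \<longlongrightarrow> 1) (at_right 0)"
  unfolding disp_shift_real_def[abs_def] using assms by real_asymp

lemma disp_shift_real_sq_asymp:
  assumes "\<Omega> > 0" "\<beta> > 0"
  shows "((\<lambda>h. ((disp_shift_real \<Omega> \<beta> \<omega> h)\<^sup>2 - 1) / h\<^sup>2) \<longlongrightarrow> \<beta>\<^sup>2 - \<omega>\<^sup>2 / \<Omega>\<^sup>2) (at_right 0)"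
proof -
  have "((\<lambda>h. ((disp_shift_real \<Omega> \<beta> \<omega> h)\<^sup>2 - 1) / h\<^sup>2) \<longlongrightarrow> \<beta> * \<beta> - \<omega>\<^sup>2 * inverse (\<Omega>\<^sup>2)) (at_right 0)"
    unfolding disp_shift_real_def using assms by real_asymp
  then show ?thesis by (simp add: power2_eq_square divide_inverse)
qed

lemma disp_scale_asymp:
  assumes "\<Omega> > 0" "\<beta> > 0"
  shows "((\<lambda>h. disp_scale \<Omega> \<beta> h * h\<^sup>2) \<longlongrightarrow> 2 * \<Omega>\<^sup>2) (at_right 0)"
  unfolding disp_scale_def using assms by real_asymp

lemma tendsto_sqrt_div_at_right_0:
  fixes g :: "real \<Rightarrow> real"
  assumes "((\<lambda>h. g h / h\<^sup>2) \<longlongrightarrow> a) (at_right 0)"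
  shows "((\<lambda>h. sqrt (g h) / h) \<longlongrightarrow> sqrt a) (at_right 0)"
proof -
  have "\<forall>\<^sub>F h in at_right 0. sqrt (g h / h\<^sup>2) = sqrt (g h) / h"
    using eventually_at_right_less[of 0] by eventually_elim (simp add: real_sqrt_divide)
  with tendsto_real_sqrt[OF assms] show ?thesis by (rule Lim_transform_eventually)
qed

lemma arsinh_div_tendsto: "((\<lambda>u::real. arsinh u / u) \<longlongrightarrow> 1) (at_right 0)"
  unfolding arsinh_real_def by real_asymp

lemma arcsin_div_tendsto: "((\<lambda>u. arcsin u / u) \<longlongrightarrow> 1) (at_right 0)"
proof -
  have "DERIV arcsin 0 :> 1" using DERIV_arcsin[of 0] by simp
  then have "((\<lambda>u. arcsin u / u) \<longlongrightarrow> 1) (at 0)"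
    using DERIV_D by fastforce
  then show ?thesis by (rule tendsto_mono[rotated]) (simp add: at_le)
qed

lemma tendsto_phase_at_right_0:
  fixes N v F :: "real \<Rightarrow> real"
  assumes N: "((\<lambda>h. N h * h) \<longlongrightarrow> X) (at_right 0)"
    and v: "((\<lambda>h. v h / h) \<longlongrightarrow> c) (at_right 0)" and v_pos: "\<forall>\<^sub>F h in at_right 0. 0 < v h"
    and F: "((\<lambda>u. F u / u) \<longlongrightarrow> 1) (at_right 0)"
  shows "((\<lambda>h. N h * F (v h)) \<longlongrightarrow> X * c) (at_right 0)"
proof -
  have "((\<lambda>h. v h / h * h) \<longlongrightarrow> c * 0) (at_right 0)"
    by (intro tendsto_intros v)
  moreover have "\<forall>\<^sub>F h in at_right 0. v h / h * h = v h"
    using eventually_at_right_less[of 0] by eventually_elim simp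
  ultimately have "(v \<longlongrightarrow> 0) (at_right 0)" by (simp add: Lim_transform_eventually)
  with v_pos have "filterlim v (at_right 0) (at_right 0)"
    by (auto simp: filterlim_at elim: eventually_mono)
  from filterlim_compose[OF F this]
  have "((\<lambda>h. (N h * h) * (F (v h) / v h * (v h / h))) \<longlongrightarrow> X * (1 * c)) (at_right 0)"
    by (intro tendsto_intros N v)
  moreover have "\<forall>\<^sub>F h in at_right 0. (N h * h) * (F (v h) / v h * (v h / h)) = N h * F (v h)"
    using eventually_conj[OF eventually_at_right_less[of 0] v_pos] by eventually_elim simp
  ultimately show ?thesis by (simp add: Lim_transform_eventually)
qed

lemma tendsto_nat_abs_mult:
  fixes n :: "real \<Rightarrow> int"
  assumes "((\<lambda>h. real_of_int (n h) * h) \<longlongrightarrow> a) (at_right 0)"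
  shows "((\<lambda>h. real (nat \<bar>n h\<bar>) * h) \<longlongrightarrow> \<bar>a\<bar>) (at_right 0)"
proof -
  have "\<forall>\<^sub>F h in at_right 0. \<bar>real_of_int (n h) * h\<bar> = real (nat \<bar>n h\<bar>) * h"
    using eventually_at_right_less[of 0] by eventually_elim (simp add: abs_mult)
  with tendsto_rabs[OF assms] show ?thesis by (simp add: Lim_transform_eventually)
qed

lemma eventually_disp_shift_real_gt_1:
  assumes "\<Omega> > 0" "\<beta> > 0" "\<omega>\<^sup>2 / \<Omega>\<^sup>2 < \<beta>\<^sup>2"
  shows "\<forall>\<^sub>F h in at_right 0. 0 < h \<and> 1 < disp_shift_real \<Omega> \<beta> \<omega> h"
proof -
  have "\<forall>\<^sub>F h in at_right 0. 0 < disp_shift_real \<Omega> \<beta> \<omega> h"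
    using order_tendstoD(1)[OF disp_shift_real_tendsto[OF assms(1,2)]] by simp
  moreover have "\<forall>\<^sub>F h in at_right 0. 0 < ((disp_shift_real \<Omega> \<beta> \<omega> h)\<^sup>2 - 1) / h\<^sup>2"
    using order_tendstoD(1)[OF disp_shift_real_sq_asymp[OF assms(1,2)]] assms(3) by simp
  ultimately show ?thesis
    using eventually_at_right_less[of 0]
  proof eventually_elim
    case (elim h)
    then have "1 ^ 2 < (disp_shift_real \<Omega> \<beta> \<omega> h) ^ 2" by (simp add: zero_less_divide_iff)
    with elim show ?case using power_less_imp_less_base[of 1 2 "disp_shift_real \<Omega> \<beta> \<omega> h"] by simp
  qed
qed

lemma eventually_disp_shift_real_between_0_1:
  assumes "\<Omega> > 0" "\<beta> > 0" "\<beta>\<^sup>2 < \<omega>\<^sup>2 / \<Omega>\<^sup>2"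
  shows "\<forall>\<^sub>F h in at_right 0. 0 < h \<and> 0 < disp_shift_real \<Omega> \<beta> \<omega> h \<and> disp_shift_real \<Omega> \<beta> \<omega> h < 1"
proof -
  have "\<forall>\<^sub>F h in at_right 0. 0 < disp_shift_real \<Omega> \<beta> \<omega> h"
    using order_tendstoD(1)[OF disp_shift_real_tendsto[OF assms(1,2)]] by simp
  moreover have "\<forall>\<^sub>F h in at_right 0. ((disp_shift_real \<Omega> \<beta> \<omega> h)\<^sup>2 - 1) / h\<^sup>2 < 0"
    using order_tendstoD(2)[OF disp_shift_real_sq_asymp[OF assms(1,2)]] assms(3) by simp
  ultimately show ?thesis
    using eventually_at_right_less[of 0]
  proof eventually_elim
    case (elim h)
    then have "(disp_shift_real \<Omega> \<beta> \<omega> h)\<^sup>2 < 1" by (simp add: divide_less_0_iff)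
    with elim show ?case by (simp add: abs_square_less_1)
  qed
qed

lemma latG_limit_below_band:
  fixes nh :: "real \<Rightarrow> int"
  assumes \<Omega>: "\<Omega> > 0" and \<beta>: "\<beta> > 0" and below: "\<omega>\<^sup>2 / \<Omega>\<^sup>2 < \<beta>\<^sup>2"
    and n: "((\<lambda>h. real_of_int (nh h) * h) \<longlongrightarrow> \<bar>x\<bar>) (at_right 0)"
  defines "\<kappa> \<equiv> sqrt (\<beta>\<^sup>2 - \<omega>\<^sup>2 / \<Omega>\<^sup>2)"
  shows "((\<lambda>h. latG \<Omega> \<beta> h (nh h) (of_real \<omega>) / of_real h)
            \<longlongrightarrow> of_real (1 / (2 * \<Omega>\<^sup>2) * exp (- \<bar>x\<bar> * \<kappa>) / \<kappa>)) (at_right 0)"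
proof -
  define w where "w = disp_shift_real \<Omega> \<beta> \<omega>"
  define u where "u h = sqrt ((w h)\<^sup>2 - 1)" for h
  define N where "N h = real (nat \<bar>nh h\<bar>)" for h
  have \<kappa>: "\<kappa> > 0" "\<kappa>\<^sup>2 = \<beta>\<^sup>2 - \<omega>\<^sup>2 / \<Omega>\<^sup>2" unfolding \<kappa>_def using below by simp_all
  have sq: "((\<lambda>h. ((w h)\<^sup>2 - 1) / h\<^sup>2) \<longlongrightarrow> \<kappa>\<^sup>2) (at_right 0)"
    unfolding w_def \<kappa>(2) using disp_shift_real_sq_asymp[OF \<Omega> \<beta>] .
  note ev = eventually_disp_shift_real_gt_1[OF \<Omega> \<beta> below, folded w_def]
  have u: "((\<lambda>h. u h / h) \<longlongrightarrow> \<kappa>) (at_right 0)"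
    using tendsto_sqrt_div_at_right_0[OF sq] \<kappa>(1) unfolding u_def by simp
  have "\<forall>\<^sub>F h in at_right 0. 0 < u h"
    using ev by eventually_elim (simp add: u_def power_gt1)
  from tendsto_phase_at_right_0[OF tendsto_nat_abs_mult[OF n, unfolded abs_abs] u this arsinh_div_tendsto]
  have phase: "((\<lambda>h. N h * arsinh (u h)) \<longlongrightarrow> \<bar>x\<bar> * \<kappa>) (at_right 0)"
    unfolding N_def .
  have "((\<lambda>h. of_real (exp (- (N h * arsinh (u h))) / (disp_scale \<Omega> \<beta> h * h\<^sup>2 * (u h / h))) :: complex)
      \<longlongrightarrow> of_real (exp (- (\<bar>x\<bar> * \<kappa>)) / (2 * \<Omega>\<^sup>2 * \<kappa>))) (at_right 0)"
    using \<Omega> \<kappa>(1) by (intro tendsto_intros phase disp_scale_asymp[OF \<Omega> \<beta>] u) simp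
  moreover have "\<forall>\<^sub>F h in at_right 0. of_real (exp (- (N h * arsinh (u h))) / (disp_scale \<Omega> \<beta> h * h\<^sup>2 * (u h / h)))
      = latG \<Omega> \<beta> h (nh h) (of_real \<omega>) / of_real h"
    using ev by eventually_elim
      (simp add: latG_below_band[OF _ \<Omega>] u_def N_def w_def power2_eq_square)
  ultimately show ?thesis by (auto elim: Lim_transform_eventually simp: field_simps)
qed

lemma latG_limit_above_band:
  fixes nh :: "real \<Rightarrow> int"
  assumes \<Omega>: "\<Omega> > 0" and \<beta>: "\<beta> > 0" and \<omega>: "\<omega> > 0" and above: "\<beta>\<^sup>2 < \<omega>\<^sup>2 / \<Omega>\<^sup>2"
    and n: "((\<lambda>h. real_of_int (nh h) * h) \<longlongrightarrow> \<bar>x\<bar>) (at_right 0)"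
  defines "q \<equiv> sqrt (\<omega>\<^sup>2 / \<Omega>\<^sup>2 - \<beta>\<^sup>2)"
  shows "\<exists>Gp :: real \<Rightarrow> complex.
           (\<forall>\<^sub>F h in at_right 0.
              ((\<lambda>\<epsilon>. latG \<Omega> \<beta> h (nh h) (of_real \<omega> + \<i> * of_real \<epsilon>)) \<longlongrightarrow> Gp h) (at_right 0))
           \<and> ((\<lambda>h. Gp h / of_real h)
                \<longlongrightarrow> \<i> / of_real (2 * \<Omega>\<^sup>2) * exp (\<i> * of_real (\<bar>x\<bar> * q)) / of_real q) (at_right 0)"
proof -
  define w where "w = disp_shift_real \<Omega> \<beta> \<omega>"
  define v where "v h = sqrt (1 - (w h)\<^sup>2)" for h
  define N where "N h = real (nat \<bar>nh h\<bar>)" for h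
  define Gp where "Gp h = \<i> * cis (N h * arcsin (v h)) / of_real (disp_scale \<Omega> \<beta> h * v h)" for h
  have q: "q > 0" "q\<^sup>2 = \<omega>\<^sup>2 / \<Omega>\<^sup>2 - \<beta>\<^sup>2" unfolding q_def using above by simp_all
  have sq: "((\<lambda>h. (1 - (w h)\<^sup>2) / h\<^sup>2) \<longlongrightarrow> q\<^sup>2) (at_right 0)"
  proof -
    have "((\<lambda>h. - (((w h)\<^sup>2 - 1) / h\<^sup>2)) \<longlongrightarrow> - (\<beta>\<^sup>2 - \<omega>\<^sup>2 / \<Omega>\<^sup>2)) (at_right 0)"
      unfolding w_def by (intro tendsto_intros disp_shift_real_sq_asymp[OF \<Omega> \<beta>])
    then show ?thesis unfolding q(2) by (simp add: minus_divide_left)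
  qed
  note ev = eventually_disp_shift_real_between_0_1[OF \<Omega> \<beta> above, folded w_def]
  have "\<forall>\<^sub>F h in at_right 0.
      ((\<lambda>\<epsilon>. latG \<Omega> \<beta> h (nh h) (of_real \<omega> + \<i> * of_real \<epsilon>)) \<longlongrightarrow> Gp h) (at_right 0)"
    using ev
  proof eventually_elim
    case (elim h)
    then show ?case unfolding Gp_def N_def v_def w_def
      by (intro latG_above_band_tendsto[OF _ \<Omega> \<omega>]) auto
  qed
  moreover have "((\<lambda>h. Gp h / of_real h)
      \<longlongrightarrow> \<i> / of_real (2 * \<Omega>\<^sup>2) * exp (\<i> * of_real (\<bar>x\<bar> * q)) / of_real q) (at_right 0)"
  proof -
    have v: "((\<lambda>h. v h / h) \<longlongrightarrow> q) (at_right 0)"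
      using tendsto_sqrt_div_at_right_0[OF sq] q(1) unfolding v_def by simp
    have "\<forall>\<^sub>F h in at_right 0. 0 < v h"
      using ev by eventually_elim (simp add: v_def abs_square_less_1)
    from tendsto_phase_at_right_0[OF tendsto_nat_abs_mult[OF n, unfolded abs_abs] v this arcsin_div_tendsto]
    have phase: "((\<lambda>h. N h * arcsin (v h)) \<longlongrightarrow> \<bar>x\<bar> * q) (at_right 0)"
      unfolding N_def .
    have "((\<lambda>h. \<i> * exp (\<i> * of_real (N h * arcsin (v h))) / of_real (disp_scale \<Omega> \<beta> h * h\<^sup>2 * (v h / h)))
        \<longlongrightarrow> \<i> * exp (\<i> * of_real (\<bar>x\<bar> * q)) / of_real (2 * \<Omega>\<^sup>2 * q)) (at_right 0)"
      using \<Omega> q(1) by (intro tendsto_intros phase disp_scale_asymp[OF \<Omega> \<beta>] v) simp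
    moreover have "\<forall>\<^sub>F h in at_right 0.
        \<i> * exp (\<i> * of_real (N h * arcsin (v h))) / of_real (disp_scale \<Omega> \<beta> h * h\<^sup>2 * (v h / h))
        = Gp h / of_real h"
      using ev by eventually_elim (simp add: Gp_def cis_conv_exp power2_eq_square)
    ultimately show ?thesis by (auto elim: Lim_transform_eventually)
  qed
  ultimately show ?thesis by blast
qed

lemma has_integral_exp_mul_helmholtz:
  fixes \<phi> \<phi>' \<phi>'' :: "real \<Rightarrow> real" and l :: complex
  assumes "a \<le> b"
    and d1: "\<And>x. (\<phi> has_real_derivative \<phi>' x) (at x)"
    and d2: "\<And>x. (\<phi>' has_real_derivative \<phi>'' x) (at x)"
  shows "((\<lambda>y. exp (l * of_real y) * (of_real (\<phi>'' y) - l\<^sup>2 * of_real (\<phi> y))) has_integral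
     exp (l * of_real b) * (of_real (\<phi>' b) - l * of_real (\<phi> b))
     - exp (l * of_real a) * (of_real (\<phi>' a) - l * of_real (\<phi> a))) {a..b}"
proof (rule fundamental_theorem_of_calculus[OF \<open>a \<le> b\<close>])
  fix y
  have "((\<lambda>y. exp (l * of_real y)) has_vector_derivative (l * exp (l * of_real y))) (at y)"
    by (rule has_vector_derivative_real_field) (auto intro!: derivative_eq_intros)
  moreover have "((\<lambda>y. of_real (\<phi>' y) - l * of_real (\<phi> y)) has_vector_derivative
      (of_real (\<phi>'' y) - l * of_real (\<phi>' y))) (at y)"
    by (intro has_vector_derivative_diff has_vector_derivative_mult_right has_vector_derivative_of_real d1 d2)
  ultimately have "((\<lambda>y. exp (l * of_real y) * (of_real (\<phi>' y) - l * of_real (\<phi> y))) has_vector_derivative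
      (exp (l * of_real y) * (of_real (\<phi>'' y) - l * of_real (\<phi>' y))
       + l * exp (l * of_real y) * (of_real (\<phi>' y) - l * of_real (\<phi> y)))) (at y)"
    by (rule has_vector_derivative_mult)
  moreover have "exp (l * of_real y) * (of_real (\<phi>'' y) - l * of_real (\<phi>' y))
      + l * exp (l * of_real y) * (of_real (\<phi>' y) - l * of_real (\<phi> y))
      = exp (l * of_real y) * (of_real (\<phi>'' y) - l\<^sup>2 * of_real (\<phi> y))"
    by (simp add: algebra_simps power2_eq_square)
  ultimately show "((\<lambda>y. exp (l * of_real y) * (of_real (\<phi>' y) - l * of_real (\<phi> y))) has_vector_derivative
      exp (l * of_real y) * (of_real (\<phi>'' y) - l\<^sup>2 * of_real (\<phi> y))) (at y within {a..b})"
    by (metis has_vector_derivative_at_within)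
qed

lemma deriv_eq_0_outside:
  fixes f :: "real \<Rightarrow> real"
  assumes "\<And>x. R < \<bar>x\<bar> \<Longrightarrow> f x = 0" "R < \<bar>x\<bar>"
  shows "deriv f x = 0"
proof -
  have "open {x::real. R < \<bar>x\<bar>}"
    by (rule open_Collect_less) (auto intro!: continuous_intros)
  then have "(f has_real_derivative 0) (at x)"
    by (rule has_field_derivative_transform_within_open[of "\<lambda>_. 0", rotated]) (use assms in auto)
  then show ?thesis by (rule DERIV_imp_deriv)
qed

lemma test_function_exp_abs_has_integral:
  fixes \<phi> :: "real \<Rightarrow> real" and l :: complex
  assumes "test_function \<phi>"
  shows "((\<lambda>y. exp (l * of_real \<bar>y\<bar>) * (of_real (deriv (deriv \<phi>) y) - l\<^sup>2 * of_real (\<phi> y)))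
           has_integral 2 * l * of_real (\<phi> 0)) UNIV"
proof -
  have d1: "(\<phi> has_real_derivative deriv \<phi> x) (at x)" for x
    using assms unfolding test_function_def DERIV_deriv_iff_real_differentiable by (metis funpow_0)
  have d2: "(deriv \<phi> has_real_derivative deriv (deriv \<phi>) x) (at x)" for x
    using assms unfolding test_function_def DERIV_deriv_iff_real_differentiable
    by (metis One_nat_def funpow_0 funpow_Suc_right o_apply)
  obtain R0 where "\<And>x. R0 < \<bar>x\<bar> \<Longrightarrow> \<phi> x = 0" using assms unfolding test_function_def by blast
  then have z0: "\<phi> x = 0" if "\<bar>R0\<bar> < \<bar>x\<bar>" for x using that by simp
  have z1: "deriv \<phi> x = 0" if "\<bar>R0\<bar> < \<bar>x\<bar>" for x by (rule deriv_eq_0_outside[OF z0 that])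
  have z2: "deriv (deriv \<phi>) x = 0" if "\<bar>R0\<bar> < \<bar>x\<bar>" for x by (rule deriv_eq_0_outside[OF z1 that])
  define R where "R = \<bar>R0\<bar> + 1"
  have R: "R > 0" "\<phi> R = 0" "\<phi> (- R) = 0" "deriv \<phi> R = 0" "deriv \<phi> (- R) = 0"
    using z0 z1 unfolding R_def by auto
  define f where "f y = exp (l * of_real \<bar>y\<bar>) * (of_real (deriv (deriv \<phi>) y) - l\<^sup>2 * of_real (\<phi> y))" for y
  have "(f has_integral (0 - (of_real (deriv \<phi> 0) - l * of_real (\<phi> 0)))) {0..R}"
    using has_integral_exp_mul_helmholtz[OF _ d1 d2, of 0 R l] R
    by (subst has_integral_cong[where g="\<lambda>y. exp (l * of_real y) * (of_real (deriv (deriv \<phi>) y) - l\<^sup>2 * of_real (\<phi> y))"])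
      (auto simp: f_def)
  moreover have "(f has_integral ((of_real (deriv \<phi> 0) + l * of_real (\<phi> 0)) - 0)) {- R..0}"
    using has_integral_exp_mul_helmholtz[OF _ d1 d2, of "- R" 0 "- l"] R
    by (subst has_integral_cong[where g="\<lambda>y. exp ((- l) * of_real y) * (of_real (deriv (deriv \<phi>) y) - (- l)\<^sup>2 * of_real (\<phi> y))"])
      (auto simp: f_def)
  ultimately have "(f has_integral ((of_real (deriv \<phi> 0) + l * of_real (\<phi> 0)) - 0)
      + (0 - (of_real (deriv \<phi> 0) - l * of_real (\<phi> 0)))) {- R..R}"
    using R(1) by (intro has_integral_combine[of "- R" 0 R]) auto
  moreover have "((of_real (deriv \<phi> 0) + l * of_real (\<phi> 0)) - 0)
      + (0 - (of_real (deriv \<phi> 0) - l * of_real (\<phi> 0))) = 2 * l * of_real (\<phi> 0)"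
    by (simp add: algebra_simps)
  ultimately have "(f has_integral 2 * l * of_real (\<phi> 0)) {- R..R}" by (simp only:)
  then have "(f has_integral 2 * l * of_real (\<phi> 0)) UNIV"
    by (rule has_integral_on_superset) (auto simp: f_def R_def z0 z2)
  then show ?thesis unfolding f_def .
qed

lemma solves_green_eq_exp_abs:
  fixes l C :: complex
  assumes l: "of_real (\<omega>\<^sup>2 / \<Omega>\<^sup>2 - \<beta>\<^sup>2) = - l\<^sup>2" and C: "- of_real (\<Omega>\<^sup>2) * C * (2 * l) = 1"
  shows "solves_green_eq \<Omega> \<beta> \<omega> (\<lambda>y. C * exp (l * of_real \<bar>y\<bar>))"
  unfolding solves_green_eq_def
proof (intro allI impI)
  fix \<phi> assume "test_function \<phi>"
  have "(- of_real (\<Omega>\<^sup>2) * C) * (2 * l * of_real (\<phi> 0)) = (- of_real (\<Omega>\<^sup>2) * C * (2 * l)) * of_real (\<phi> 0)"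
    by (simp only: mult.assoc)
  then have "(- of_real (\<Omega>\<^sup>2) * C) * (2 * l * of_real (\<phi> 0)) = of_real (\<phi> 0)"
    unfolding C by simp
  with has_integral_mult_right[OF test_function_exp_abs_has_integral[OF \<open>test_function \<phi>\<close>, of l], of "- of_real (\<Omega>\<^sup>2) * C"]
  have "((\<lambda>y. - of_real (\<Omega>\<^sup>2) * C * (exp (l * of_real \<bar>y\<bar>)
      * (of_real (deriv (deriv \<phi>) y) - l\<^sup>2 * of_real (\<phi> y)))) has_integral of_real (\<phi> 0)) UNIV"
    by (simp only:)
  moreover have "of_real (deriv (deriv \<phi>) y + (\<omega>\<^sup>2 / \<Omega>\<^sup>2 - \<beta>\<^sup>2) * \<phi> y)
      = of_real (deriv (deriv \<phi>) y) - l\<^sup>2 * of_real (\<phi> y)" for y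
    by (simp only: of_real_add of_real_mult l) simp
  ultimately show "((\<lambda>y. - of_real (\<Omega>\<^sup>2) * (C * exp (l * of_real \<bar>y\<bar>))
      * of_real (deriv (deriv \<phi>) y + (\<omega>\<^sup>2 / \<Omega>\<^sup>2 - \<beta>\<^sup>2) * \<phi> y)) has_integral of_real (\<phi> 0)) UNIV"
    by (simp add: mult.assoc)
qed

lemma solves_green_eq_evanescent:
  assumes "\<Omega> > 0" "\<omega>\<^sup>2 / \<Omega>\<^sup>2 < \<beta>\<^sup>2"
  defines "\<kappa> \<equiv> sqrt (\<beta>\<^sup>2 - \<omega>\<^sup>2 / \<Omega>\<^sup>2)"
  shows "solves_green_eq \<Omega> \<beta> \<omega> (\<lambda>y. of_real (1 / (2 * \<Omega>\<^sup>2) * exp (- \<bar>y\<bar> * \<kappa>) / \<kappa>))"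
proof -
  have \<kappa>: "\<kappa> > 0" "\<kappa>\<^sup>2 = \<beta>\<^sup>2 - \<omega>\<^sup>2 / \<Omega>\<^sup>2" unfolding \<kappa>_def using assms(2) by simp_all
  have "of_real (\<omega>\<^sup>2 / \<Omega>\<^sup>2 - \<beta>\<^sup>2) = (of_real (- \<kappa>\<^sup>2) :: complex)" using \<kappa>(2) by simp
  then have "of_real (\<omega>\<^sup>2 / \<Omega>\<^sup>2 - \<beta>\<^sup>2) = - (- of_real \<kappa> :: complex)\<^sup>2" by simp
  moreover have "- of_real (\<Omega>\<^sup>2) * of_real (1 / (2 * \<Omega>\<^sup>2 * \<kappa>)) * (2 * (- of_real \<kappa>)) = (1 :: complex)"
    using \<kappa>(1) assms(1) by (simp add: field_simps)
  ultimately have "solves_green_eq \<Omega> \<beta> \<omega> (\<lambda>y. of_real (1 / (2 * \<Omega>\<^sup>2 * \<kappa>)) * exp (- of_real \<kappa> * of_real \<bar>y\<bar>))"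
    by (rule solves_green_eq_exp_abs)
  moreover have "(\<lambda>y. of_real (1 / (2 * \<Omega>\<^sup>2 * \<kappa>)) * exp (- of_real \<kappa> * of_real \<bar>y\<bar>))
      = (\<lambda>y. of_real (1 / (2 * \<Omega>\<^sup>2) * exp (- \<bar>y\<bar> * \<kappa>) / \<kappa>) :: complex)"
    by (simp add: fun_eq_iff exp_of_real[symmetric] mult.commute)
  ultimately show ?thesis by metis
qed

lemma solves_green_eq_outgoing:
  assumes "\<Omega> > 0" "\<beta>\<^sup>2 < \<omega>\<^sup>2 / \<Omega>\<^sup>2"
  defines "q \<equiv> sqrt (\<omega>\<^sup>2 / \<Omega>\<^sup>2 - \<beta>\<^sup>2)"
  shows "solves_green_eq \<Omega> \<beta> \<omega> (\<lambda>y. \<i> / of_real (2 * \<Omega>\<^sup>2) * exp (\<i> * of_real (\<bar>y\<bar> * q)) / of_real q)"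
proof -
  have q: "q > 0" "q\<^sup>2 = \<omega>\<^sup>2 / \<Omega>\<^sup>2 - \<beta>\<^sup>2" unfolding q_def using assms(2) by simp_all
  have "of_real (\<omega>\<^sup>2 / \<Omega>\<^sup>2 - \<beta>\<^sup>2) = (of_real (q\<^sup>2) :: complex)" using q(2) by simp
  then have "of_real (\<omega>\<^sup>2 / \<Omega>\<^sup>2 - \<beta>\<^sup>2) = - (\<i> * of_real q)\<^sup>2" by (simp add: power_mult_distrib)
  moreover have "- of_real (\<Omega>\<^sup>2) * (\<i> / of_real (2 * \<Omega>\<^sup>2 * q)) * (2 * (\<i> * of_real q)) = 1"
    using q(1) assms(1) by (simp add: field_simps)
  ultimately have "solves_green_eq \<Omega> \<beta> \<omega> (\<lambda>y. \<i> / of_real (2 * \<Omega>\<^sup>2 * q) * exp (\<i> * of_real q * of_real \<bar>y\<bar>))"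
    by (rule solves_green_eq_exp_abs)
  moreover have "(\<lambda>y. \<i> / of_real (2 * \<Omega>\<^sup>2 * q) * exp (\<i> * of_real q * of_real \<bar>y\<bar>))
      = (\<lambda>y. \<i> / of_real (2 * \<Omega>\<^sup>2) * exp (\<i> * of_real (\<bar>y\<bar> * q)) / of_real q)"
    by (simp add: fun_eq_iff mult.commute mult.left_commute)
  ultimately show ?thesis by metis
qed

theorem mainTheorem5:
  fixes \<Omega> \<beta> x \<omega> :: real and nh :: "real \<Rightarrow> int"
  assumes "\<Omega> > 0" and "\<beta> > 0"
    and "((\<lambda>h. real_of_int (nh h) * h) \<longlongrightarrow> \<bar>x\<bar>) (at_right 0)"
  shows
    "(0 \<le> \<omega> \<and> \<omega> < \<beta> * \<Omega> \<longrightarrow>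
       (let \<kappa> = sqrt (\<beta>\<^sup>2 - \<omega>\<^sup>2 / \<Omega>\<^sup>2) in
         ((\<lambda>h. latG \<Omega> \<beta> h (nh h) (of_real \<omega>) / of_real h)
            \<longlongrightarrow> of_real (1 / (2 * \<Omega>\<^sup>2) * exp (- \<bar>x\<bar> * \<kappa>) / \<kappa>)) (at_right 0)
         \<and> solves_green_eq \<Omega> \<beta> \<omega>
             (\<lambda>y. of_real (1 / (2 * \<Omega>\<^sup>2) * exp (- \<bar>y\<bar> * \<kappa>) / \<kappa>))))
     \<and>
     (\<omega> > \<beta> * \<Omega> \<longrightarrow>
       (let q = sqrt (\<omega>\<^sup>2 / \<Omega>\<^sup>2 - \<beta>\<^sup>2) in
         (\<exists>Gp :: real \<Rightarrow> complex.
            (\<forall>\<^sub>F h in at_right 0.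
               ((\<lambda>\<epsilon>. latG \<Omega> \<beta> h (nh h) (of_real \<omega> + \<i> * of_real \<epsilon>)) \<longlongrightarrow> Gp h) (at_right 0))
            \<and> ((\<lambda>h. Gp h / of_real h)
                 \<longlongrightarrow> \<i> / of_real (2 * \<Omega>\<^sup>2) * exp (\<i> * of_real (\<bar>x\<bar> * q)) / of_real q) (at_right 0))
         \<and> solves_green_eq \<Omega> \<beta> \<omega>
             (\<lambda>y. \<i> / of_real (2 * \<Omega>\<^sup>2) * exp (\<i> * of_real (\<bar>y\<bar> * q)) / of_real q)))"
proof -
  have below: "\<omega>\<^sup>2 / \<Omega>\<^sup>2 < \<beta>\<^sup>2" if "0 \<le> \<omega>" "\<omega> < \<beta> * \<Omega>"
  proof -
    have "(\<omega> / \<Omega>)\<^sup>2 < \<beta>\<^sup>2" using that assms(1) by (intro power_strict_mono) (auto simp: field_simps)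
    then show ?thesis by (simp add: power_divide)
  qed
  have above: "0 < \<omega>" "\<beta>\<^sup>2 < \<omega>\<^sup>2 / \<Omega>\<^sup>2" if "\<beta> * \<Omega> < \<omega>"
  proof -
    have "\<beta>\<^sup>2 < (\<omega> / \<Omega>)\<^sup>2" using that assms(1,2) by (intro power_strict_mono) (auto simp: field_simps)
    then show "0 < \<omega>" "\<beta>\<^sup>2 < \<omega>\<^sup>2 / \<Omega>\<^sup>2"
      using that mult_pos_pos[OF assms(2,1)] by (simp_all add: power_divide)
  qed
  show ?thesis
    unfolding Let_def
    using below latG_limit_below_band[OF assms(1,2) _ assms(3)] solves_green_eq_evanescent[OF assms(1)]
      above latG_limit_above_band[OF assms(1,2) _ _ assms(3)] solves_green_eq_outgoing[OF assms(1)]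
    by blast
qed

end
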